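(* Fix $r\in(1,\infty)$ and a $w$-moderate weight $m$, assume $RC_K:f\mapsto f*K$ is well-defined and bounded on $L_{r,m}(G)$, and assume there is a continuous $W:G\to\mathbb C$ with $W*K=K$ and $\check M^\rho_QW\in L_{1,w}(G)\cap L_{1,w\Delta^{-1}}(G)$ for some compact unit neighbourhood $Q$. Let $X=(x_i)_{i\in I}$ be relatively separated and $(m_X)_i=m(x_i)$. Then: (i) if $U$ is a compact unit neighbourhood and $\Psi=(\psi_i)_{i\in I}$ is a $U$-BUPU with localizing family $X$, the analysis operator $L_{r,m}(G)\to\ell_{r,m_X}(I)$, $f\mapsto(\langle f,\psi_i\rangle_{L_2})_{i\in I}$, is well-defined and bounded; (ii) the synthesis operator $\ell_{r,m_X}(I)\to L_{r,m}(G)$, $(c_i)\mapsto\sum_{i\in I}c_i\,\lambda(x_i)W$, is well-defined and bounded, the defining series converging absolutely almost everywhere.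
   Context: Setting. $G$ is a locally compact, second countable group with left Haar measure, identity $e$, modular function $\Delta$; $(f*g)(x)=\int_G f(y)g(y^{-1}x)\,dy$, $\lambda(x)f(y)=f(x^{-1}y)$, $\langle f,g\rangle_{L_2}=\int_Gf\overline g$. $w:G\to(0,\infty)$ continuous with $w(xy)\le w(x)w(y)$, $w(x)=w(x^{-1})$; $L_{p,v}(G)$: measurable $f$ with $\|vf\|_{L_p}<\infty$; $\ell_{r,\theta}(I)=\{c:(\theta_ic_i)\in\ell_r(I)\}$. A continuous $m$ is $w$-moderate if $m(xy)\le w(x)m(y)$ and $m(xy)\le m(x)w(y)$. $K(x)=\langle u,\pi(x)u\rangle_{\mathcal H}$ is the reproducing kernel of a strongly continuous unitary representation on a separable Hilbert space with $u$ such that $v\mapsto\langle v,\pi(\cdot)u\rangle$ is an isometry into $L_2(G)$; standing assumption $K\in L_{p,w}(G)$ for all $p\in(1,\infty)$. $\check M^\rho_QW(x)=\|W\|_{L_\infty(Qx)}$. Relatively separated: for every compact unit neighbourhood $Q'$ there is $N$ with $\sum_i\chi_{x_iQ'}\le N$ on $G$. $U$-BUPU with localizing family $X$: measurable $\psi_i:G\to[0,1]$, $X$ relatively separated, $\psi_i\equiv0$ off $x_iU$, $\sum_i\psi_i\equiv1$. *)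

theory Defs
  imports "HOL-Analysis.Analysis" "HOL-Probability.Essential_Supremum"
begin

text \<open>The group G is a type 'g of class group_add (non-commutative groups,
 written additively: x + y is the group product, -x the inverse, 0 the identity).\<close>

definition lc_haar_group ::
  "'g::{group_add,t2_space,second_countable_topology} measure \<Rightarrow> ('g \<Rightarrow> real) \<Rightarrow> bool" where
  "lc_haar_group \<mu> \<Delta> \<longleftrightarrow>
     continuous_on UNIV (\<lambda>p::'g \<times> 'g. fst p + snd p) \<and>
     continuous_on UNIV (uminus :: 'g \<Rightarrow> 'g) \<and>
     locally_compact_space (euclidean :: 'g topology) \<and>
     sets \<mu> = sets borel \<and>
     (\<forall>A \<in> sets borel. \<forall>x. emeasure \<mu> ((\<lambda>y. x + y) ` A) = emeasure \<mu> A) \<and>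
     (\<forall>C. compact C \<longrightarrow> emeasure \<mu> C < \<infinity>) \<and>
     (\<forall>V. open V \<and> V \<noteq> {} \<longrightarrow> emeasure \<mu> V > 0) \<and>
     (\<forall>x. \<Delta> x > 0) \<and>
     (\<forall>A \<in> sets borel. \<forall>x. emeasure \<mu> ((\<lambda>y. y + x) ` A) = ennreal (\<Delta> x) * emeasure \<mu> A)"

definition hnorm :: "('h \<Rightarrow> 'h \<Rightarrow> complex) \<Rightarrow> 'h \<Rightarrow> real" where
  "hnorm ip v = sqrt (Re (ip v v))"

definition hilbert_space :: "(complex \<Rightarrow> 'h::ab_group_add \<Rightarrow> 'h) \<Rightarrow> ('h \<Rightarrow> 'h \<Rightarrow> complex) \<Rightarrow> bool" where
  "hilbert_space smul ip \<longleftrightarrow>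
     (\<forall>a b v. smul a (smul b v) = smul (a * b) v) \<and> (\<forall>v. smul 1 v = v) \<and>
     (\<forall>a v w. smul a (v + w) = smul a v + smul a w) \<and>
     (\<forall>a b v. smul (a + b) v = smul a v + smul b v) \<and>
     (\<forall>u v w. ip (u + v) w = ip u w + ip v w) \<and>
     (\<forall>a v w. ip (smul a v) w = a * ip v w) \<and>
     (\<forall>v w. ip w v = cnj (ip v w)) \<and>
     (\<forall>v. 0 \<le> Re (ip v v)) \<and> (\<forall>v. ip v v = 0 \<longrightarrow> v = 0) \<and>
     (\<forall>s :: nat \<Rightarrow> 'h. (\<forall>\<epsilon>>0. \<exists>N. \<forall>j\<ge>N. \<forall>k\<ge>N. hnorm ip (s j - s k) < \<epsilon>) \<longrightarrow>
         (\<exists>l. \<forall>\<epsilon>>0. \<exists>N. \<forall>n\<ge>N. hnorm ip (s n - l) < \<epsilon>)) \<and>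
     (\<exists>D. countable D \<and> (\<forall>v \<epsilon>. \<epsilon> > 0 \<longrightarrow> (\<exists>d\<in>D. hnorm ip (v - d) < \<epsilon>)))"

definition unitary_rep ::
  "(complex \<Rightarrow> 'h::ab_group_add \<Rightarrow> 'h) \<Rightarrow> ('h \<Rightarrow> 'h \<Rightarrow> complex) \<Rightarrow>
   ('g::{group_add,topological_space} \<Rightarrow> 'h \<Rightarrow> 'h) \<Rightarrow> bool" where
  "unitary_rep smul ip \<pi> \<longleftrightarrow>
     (\<forall>x a v w. \<pi> x (smul a v + w) = smul a (\<pi> x v) + \<pi> x w) \<and>
     (\<forall>x v w. ip (\<pi> x v) (\<pi> x w) = ip v w) \<and>
     (\<forall>x. surj (\<pi> x)) \<and>
     (\<forall>x y. \<pi> (x + y) = \<pi> x \<circ> \<pi> y) \<and> (\<forall>v. \<pi> 0 v = v) \<and>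
     (\<forall>v x0 \<epsilon>. \<epsilon> > 0 \<longrightarrow>
        (\<exists>N. open N \<and> x0 \<in> N \<and> (\<forall>x\<in>N. hnorm ip (\<pi> x v - \<pi> x0 v) < \<epsilon>)))"

definition admissible ::
  "'g measure \<Rightarrow> ('h \<Rightarrow> 'h \<Rightarrow> complex) \<Rightarrow> ('g \<Rightarrow> 'h \<Rightarrow> 'h) \<Rightarrow> 'h \<Rightarrow> bool" where
  "admissible \<mu> ip \<pi> u \<longleftrightarrow>
     (\<forall>v. (\<lambda>x. ip v (\<pi> x u)) \<in> borel_measurable \<mu> \<and>
          integrable \<mu> (\<lambda>x. (cmod (ip v (\<pi> x u)))\<^sup>2) \<and>
          (\<integral>x. (cmod (ip v (\<pi> x u)))\<^sup>2 \<partial>\<mu>) = (hnorm ip v)\<^sup>2)"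

text \<open>Weighted Lebesgue spaces (functions, not classes) and their norms.\<close>
definition Lpv :: "'g measure \<Rightarrow> real \<Rightarrow> ('g \<Rightarrow> real) \<Rightarrow> ('g \<Rightarrow> complex) set" where
  "Lpv \<mu> p v = {f. f \<in> borel_measurable \<mu> \<and> integrable \<mu> (\<lambda>x. (v x * cmod (f x)) powr p)}"

definition Lpv_norm :: "'g measure \<Rightarrow> real \<Rightarrow> ('g \<Rightarrow> real) \<Rightarrow> ('g \<Rightarrow> complex) \<Rightarrow> real" where
  "Lpv_norm \<mu> p v f = (\<integral>x. (v x * cmod (f x)) powr p \<partial>\<mu>) powr (1 / p)"

definition ell_space :: "'i set \<Rightarrow> real \<Rightarrow> ('i \<Rightarrow> real) \<Rightarrow> ('i \<Rightarrow> complex) set" where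
  "ell_space I r \<theta> = {c. (\<lambda>i. (\<theta> i * cmod (c i)) powr r) summable_on I}"

definition ell_norm :: "'i set \<Rightarrow> real \<Rightarrow> ('i \<Rightarrow> real) \<Rightarrow> ('i \<Rightarrow> complex) \<Rightarrow> real" where
  "ell_norm I r \<theta> c = (\<Sum>\<^sub>\<infinity>i\<in>I. (\<theta> i * cmod (c i)) powr r) powr (1 / r)"

definition conv :: "'g::group_add measure \<Rightarrow> ('g \<Rightarrow> complex) \<Rightarrow> ('g \<Rightarrow> complex) \<Rightarrow> 'g \<Rightarrow> complex" where
  "conv \<mu> f g x = (\<integral>y. f y * g (- y + x) \<partial>\<mu>)"

definition conv_bounded :: "'g::group_add measure \<Rightarrow> real \<Rightarrow> ('g \<Rightarrow> real) \<Rightarrow> ('g \<Rightarrow> complex) \<Rightarrow> bool" where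
  "conv_bounded \<mu> r m K \<longleftrightarrow>
     (\<forall>f \<in> Lpv \<mu> r m. (AE x in \<mu>. integrable \<mu> (\<lambda>y. f y * K (- y + x))) \<and>
                     conv \<mu> f K \<in> Lpv \<mu> r m) \<and>
     (\<exists>C. \<forall>f \<in> Lpv \<mu> r m. Lpv_norm \<mu> r m (conv \<mu> f K) \<le> C * Lpv_norm \<mu> r m f)"

definition sym_submult_weight :: "('g::{group_add,topological_space} \<Rightarrow> real) \<Rightarrow> bool" where
  "sym_submult_weight w \<longleftrightarrow> continuous_on UNIV w \<and> (\<forall>x. w x > 0) \<and>
     (\<forall>x y. w (x + y) \<le> w x * w y) \<and> (\<forall>x. w x = w (- x))"

definition moderate :: "('g::{group_add,topological_space} \<Rightarrow> real) \<Rightarrow> ('g \<Rightarrow> real) \<Rightarrow> bool" where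
  "moderate w m \<longleftrightarrow> continuous_on UNIV m \<and> (\<forall>x. m x > 0) \<and>
     (\<forall>x y. m (x + y) \<le> w x * m y \<and> m (x + y) \<le> m x * w y)"

definition unit_nbhd :: "'g::{group_add,topological_space} set \<Rightarrow> bool" where
  "unit_nbhd Q \<longleftrightarrow> compact Q \<and> 0 \<in> interior Q"

definition locmax :: "'g::group_add measure \<Rightarrow> 'g set \<Rightarrow> ('g \<Rightarrow> complex) \<Rightarrow> 'g \<Rightarrow> real" where
  "locmax \<mu> Q W x =
     real_of_ereal (esssup \<mu> (\<lambda>y. ereal (indicator ((\<lambda>q. q + x) ` Q) y * cmod (W y))))"

definition rel_separated :: "'i set \<Rightarrow> ('i \<Rightarrow> 'g::{group_add,topological_space}) \<Rightarrow> bool" where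
  "rel_separated I x \<longleftrightarrow>
     (\<forall>Q'. unit_nbhd Q' \<longrightarrow> (\<exists>N::nat. \<forall>y.
        finite {i\<in>I. y \<in> (\<lambda>q. x i + q) ` Q'} \<and> card {i\<in>I. y \<in> (\<lambda>q. x i + q) ` Q'} \<le> N))"

definition BUPU :: "'g::{group_add,topological_space} set \<Rightarrow> 'i set \<Rightarrow> ('i \<Rightarrow> 'g) \<Rightarrow> ('i \<Rightarrow> 'g \<Rightarrow> real) \<Rightarrow> bool" where
  "BUPU U I x \<psi> \<longleftrightarrow> rel_separated I x \<and>
     (\<forall>i\<in>I. \<psi> i \<in> borel_measurable borel \<and> (\<forall>y. 0 \<le> \<psi> i y \<and> \<psi> i y \<le> 1) \<and>
            (\<forall>y. y \<notin> (\<lambda>q. x i + q) ` U \<longrightarrow> \<psi> i y = 0)) \<and>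
     (\<forall>y. ((\<lambda>i. \<psi> i y) has_sum 1) I)"

end

theory Submission
  imports Defs
begin

(*
  Both operators are controlled by two local estimates and bounded overlap of the
  translates x_i Q.  For analysis, a moderate weight varies by at most a bounded factor on
  x_i U, so m(x_i) |<f, psi_i>| is bounded by the integral of m |f| over x_i U; Hoelder on
  this set of fixed Haar measure and summation over the at most N overlapping translates
  give the l^r bound.  For synthesis, |W z| is dominated by the local maximal function at
  every point of the neighbourhood Q^{-1} z; averaging over these right translates (whose
  measure involves the modular function) gives sup_y sum_i w |W| (x_i^{-1} y) < infinity
  from the L_{1,w/Delta} hypothesis, and then a weighted Hoelder inequality and left
  invariance reduce the L^r bound to the L_{1,w} norm of the maximal function.
*)

lemma le_add_powr_scaled:
  fixes a l r :: real
  assumes a: "a \<ge> 0" and l: "l > 0" and r: "r \<ge> 1"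
  shows "a \<le> l + l powr (1 - r) * a powr r"
proof (cases "a \<le> l")
  case True
  then show ?thesis by (simp add: add_increasing2)
next
  case False
  then have "a * 1 \<le> a * (a / l) powr (r - 1)"
    using l r by (intro mult_left_mono ge_one_powr_ge_zero) auto
  also have "\<dots> = l powr (1 - r) * a powr r"
    using False l by (simp add: powr_divide powr_diff powr_minus_divide field_simps)
  finally show ?thesis using l by (simp add: add_increasing)
qed

lemma powr_le_of_scaled_bound:
  fixes t M A r :: real
  assumes t: "t \<ge> 0" and M: "M > 0" and A: "A \<ge> 0" and r: "r > 1"
    and bound: "\<And>l. l > 0 \<Longrightarrow> t \<le> l * M + l powr (1 - r) * A"
  shows "t powr r \<le> 2 powr r * M powr (r - 1) * A"
proof (cases "t = 0")
  case True then show ?thesis using A by simp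
next
  case False
  define l where "l = t / (2 * M)"
  have l: "l > 0" and tl: "t = 2 * M * l" using False t M by (auto simp: l_def)
  have "t / 2 \<le> l powr (1 - r) * A" using bound[OF l] tl by simp
  then have key: "t / 2 * l powr (r - 1) \<le> A"
    using l by (simp add: powr_diff powr_minus_divide divide_simps mult.commute split: if_splits)
  have "t powr r = 2 * (2 * M) powr (r - 1) * (t / 2 * l powr (r - 1))"
    using l M tl by (simp add: powr_mult powr_diff)
  also have "\<dots> \<le> 2 * (2 * M) powr (r - 1) * A"
    using key by (intro mult_left_mono) auto
  also have "2 * (2 * M) powr (r - 1) = 2 powr r * M powr (r - 1)"
    using M by (simp add: powr_mult powr_diff)
  finally show ?thesis .
qed

(* Hoelder's inequality for finite weighted sums, with the non-sharp constant 2^r obtained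
   by optimising Young's inequality over the scale l. *)
lemma sum_mult_powr_le:
  fixes a F :: "'i \<Rightarrow> real"
  assumes E: "finite E" and a: "\<And>i. i \<in> E \<Longrightarrow> a i \<ge> 0" and F: "\<And>i. i \<in> E \<Longrightarrow> F i \<ge> 0"
    and B: "sum F E \<le> B" "B > 0" and r: "r > 1"
  shows "(\<Sum>i\<in>E. a i * F i) powr r \<le> 2 powr r * B powr (r - 1) * (\<Sum>i\<in>E. a i powr r * F i)"
proof (rule powr_le_of_scaled_bound[OF _ B(2) _ r])
  show "0 \<le> (\<Sum>i\<in>E. a i * F i)" "0 \<le> (\<Sum>i\<in>E. a i powr r * F i)"
    using a F by (auto intro!: sum_nonneg)
  fix l :: real assume l: "l > 0"
  have "(\<Sum>i\<in>E. a i * F i) \<le> (\<Sum>i\<in>E. (l + l powr (1 - r) * a i powr r) * F i)"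
    using le_add_powr_scaled[OF a l] r F by (intro sum_mono mult_right_mono) auto
  also have "\<dots> = l * sum F E + l powr (1 - r) * (\<Sum>i\<in>E. a i powr r * F i)"
    by (simp add: algebra_simps sum.distrib sum_distrib_left)
  also have "\<dots> \<le> l * B + l powr (1 - r) * (\<Sum>i\<in>E. a i powr r * F i)"
    using B l by simp
  finally show "(\<Sum>i\<in>E. a i * F i) \<le> l * B + l powr (1 - r) * (\<Sum>i\<in>E. a i powr r * F i)" .
qed

lemma integral_indicator_mult_powr_le:
  fixes g :: "'a \<Rightarrow> real"
  assumes E: "E \<in> sets M" "emeasure M E < \<infinity>" "measure M E > 0"
    and g: "g \<in> borel_measurable M" "\<And>y. g y \<ge> 0"
    and gr: "integrable M (\<lambda>y. indicator E y * g y powr r)" and r: "r > 1"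
  shows "integrable M (\<lambda>y. indicator E y * g y)"
    and "(\<integral>y. indicator E y * g y \<partial>M) powr r
           \<le> 2 powr r * measure M E powr (r - 1) * (\<integral>y. indicator E y * g y powr r \<partial>M)"
proof -
  have iE: "integrable M (indicator E :: 'a \<Rightarrow> real)"
    using E by (intro integrable_real_indicator) auto
  have young: "indicator E y * g y \<le> l * indicator E y + l powr (1 - r) * (indicator E y * g y powr r)"
    if "l > 0" for l y
    using le_add_powr_scaled[OF g(2) that, of r] r by (auto simp: indicator_def)
  show ig: "integrable M (\<lambda>y. indicator E y * g y)"
  proof (rule Bochner_Integration.integrable_bound[of _ "\<lambda>y. indicator E y + indicator E y * g y powr r"])
    show "AE y in M. norm (indicator E y * g y) \<le> norm (indicator E y + indicator E y * g y powr r)"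
      using young[of 1] g(2) by (intro AE_I2) (simp add: indicator_def)
  qed (use iE gr E g in auto)
  show "(\<integral>y. indicator E y * g y \<partial>M) powr r
           \<le> 2 powr r * measure M E powr (r - 1) * (\<integral>y. indicator E y * g y powr r \<partial>M)"
  proof (rule powr_le_of_scaled_bound[OF _ E(3) _ r])
    show "0 \<le> (\<integral>y. indicator E y * g y \<partial>M)" "0 \<le> (\<integral>y. indicator E y * g y powr r \<partial>M)"
      using g(2) by (auto intro!: Bochner_Integration.integral_nonneg)
    fix l :: real assume l: "l > 0"
    have "(\<integral>y. indicator E y * g y \<partial>M)
          \<le> (\<integral>y. l * indicator E y + l powr (1 - r) * (indicator E y * g y powr r) \<partial>M)"
      using young[OF l] iE gr by (intro integral_mono ig) auto
    also have "\<dots> = l * measure M E + l powr (1 - r) * (\<integral>y. indicator E y * g y powr r \<partial>M)"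
      using iE gr E by simp
    finally show "(\<integral>y. indicator E y * g y \<partial>M)
          \<le> l * measure M E + l powr (1 - r) * (\<integral>y. indicator E y * g y powr r \<partial>M)" .
  qed
qed

lemma sum_integral_indicator_le:
  fixes h :: "'a \<Rightarrow> real"
  assumes F: "finite F" "F \<subseteq> I" and E: "\<And>i. E i \<in> sets M"
    and h: "integrable M h" "\<And>y. h y \<ge> 0"
    and overlap: "\<And>y. finite {i\<in>I. y \<in> E i}" "\<And>y. card {i\<in>I. y \<in> E i} \<le> N"
  shows "(\<Sum>i\<in>F. \<integral>y. indicator (E i) y * h y \<partial>M) \<le> N * (\<integral>y. h y \<partial>M)"
proof -
  have iEh: "integrable M (\<lambda>y. indicator (E i) y * h y)" for i
    using integrable_real_mult_indicator[OF E h(1)] by (simp add: mult.commute)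
  have count: "(\<Sum>i\<in>F. indicator (E i) y :: real) \<le> N" for y
  proof -
    have "(\<Sum>i\<in>F. indicator (E i) y :: real) = card {i\<in>F. y \<in> E i}"
      using F(1) by (simp add: indicator_def Int_def conj_commute)
    also have "card {i\<in>F. y \<in> E i} \<le> card {i\<in>I. y \<in> E i}"
      using F overlap(1) by (intro card_mono) auto
    finally show ?thesis using overlap(2)[of y] by linarith
  qed
  have "(\<Sum>i\<in>F. \<integral>y. indicator (E i) y * h y \<partial>M) = (\<integral>y. (\<Sum>i\<in>F. indicator (E i) y) * h y \<partial>M)"
    using iEh by (simp add: sum_distrib_right)
  also have "\<dots> \<le> (\<integral>y. N * h y \<partial>M)"
    using count h iEh by (intro integral_mono mult_right_mono) (auto simp: sum_distrib_right)
  finally show ?thesis by simp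
qed

lemma countable_incseq_finite_exhaustion:
  assumes "countable J"
  obtains En :: "nat \<Rightarrow> 'i set" where "incseq En" "\<And>n. finite (En n)" "(\<Union>n. En n) = J"
proof (cases "J = {}")
  case True
  then show ?thesis by (intro that[of "\<lambda>_. {}"]) (auto simp: incseq_def)
next
  case False
  show ?thesis
  proof (rule that[of "\<lambda>n. from_nat_into J ` {..<n}"])
    show "incseq (\<lambda>n. from_nat_into J ` {..<n})"
      by (auto simp: incseq_def)
    have "(\<Union>n. from_nat_into J ` {..<n}) = range (from_nat_into J)"
      by auto
    then show "(\<Union>n. from_nat_into J ` {..<n}) = J"
      using False assms by (simp add: range_from_nat_into)
  qed simp
qed

lemma finite_subset_incseq_Union:
  assumes En: "incseq En" and X: "finite X" "X \<subseteq> (\<Union>n. En n)"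
  shows "\<exists>n. X \<subseteq> En n"
  using X
proof (induction X rule: finite_induct)
  case (insert j X)
  obtain n where "X \<subseteq> En n" using insert by blast
  moreover obtain k where "j \<in> En k" using insert.prems by blast
  ultimately have "insert j X \<subseteq> En (max n k)"
    using monoD[OF En, of n "max n k"] monoD[OF En, of k "max n k"] by auto
  then show ?case by blast
qed simp

lemma filterlim_incseq_finite_subsets_at_top:
  assumes En: "incseq En" "\<And>n. finite (En n)" "(\<Union>n. En n) = J"
  shows "filterlim En (finite_subsets_at_top J) sequentially"
  unfolding filterlim_finite_subsets_at_top
proof (intro allI impI)
  fix X assume "finite X \<and> X \<subseteq> J"
  then obtain n where "X \<subseteq> En n"
    using finite_subset_incseq_Union[OF En(1)] En(3) by blast
  then show "\<forall>\<^sub>F n in sequentially. finite (En n) \<and> X \<subseteq> En n \<and> En n \<subseteq> J"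
    using En unfolding eventually_sequentially incseq_def by blast
qed

lemma abs_summable_on_iff_SUP_finite_exhaustion:
  fixes g :: "'i \<Rightarrow> 'b::real_normed_vector"
  assumes En: "incseq En" "\<And>n. finite (En n)" "(\<Union>n. En n) = J"
    and J: "J \<subseteq> I" "\<And>i. i \<in> I - J \<Longrightarrow> g i = 0"
  shows "(\<lambda>i. norm (g i)) summable_on I \<longleftrightarrow> (SUP n. ennreal (\<Sum>i\<in>En n. norm (g i))) < top"
proof -
  have "(\<lambda>i. norm (g i)) summable_on I \<longleftrightarrow> (\<lambda>i. norm (g i)) summable_on J"
    using J by (intro summable_on_cong_neutral) auto
  also have "\<dots> \<longleftrightarrow> (SUP n. ennreal (\<Sum>i\<in>En n. norm (g i))) < top"
  proof
    assume "(\<lambda>i. norm (g i)) summable_on J"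
    then have "(\<Sum>i\<in>En n. norm (g i)) \<le> (\<Sum>\<^sub>\<infinity>i\<in>J. norm (g i))" for n
      using En by (intro finite_sum_le_infsum) auto
    then have "(SUP n. ennreal (\<Sum>i\<in>En n. norm (g i))) \<le> ennreal (\<Sum>\<^sub>\<infinity>i\<in>J. norm (g i))"
      by (intro SUP_least ennreal_leI)
    then show "(SUP n. ennreal (\<Sum>i\<in>En n. norm (g i))) < top"
      using ennreal_less_top by (rule order.strict_trans1)
  next
    assume "(SUP n. ennreal (\<Sum>i\<in>En n. norm (g i))) < top"
    then obtain b where b: "(SUP n. ennreal (\<Sum>i\<in>En n. norm (g i))) = ennreal b" "b \<ge> 0"
      by (auto simp: less_top_ennreal)
    have partial: "(\<Sum>i\<in>En n. norm (g i)) \<le> b" for n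
    proof -
      have "ennreal (\<Sum>i\<in>En n. norm (g i)) \<le> ennreal b"
        using b(1) by (metis SUP_upper UNIV_I)
      then show ?thesis using b(2) by (simp add: ennreal_le_iff)
    qed
    show "(\<lambda>i. norm (g i)) summable_on J"
    proof (rule nonneg_bdd_above_summable_on)
      show "bdd_above (sum (\<lambda>i. norm (g i)) ` {F. F \<subseteq> J \<and> finite F})"
      proof (rule bdd_aboveI2)
        fix F assume "F \<in> {F. F \<subseteq> J \<and> finite F}"
        then obtain n where "F \<subseteq> En n"
          using finite_subset_incseq_Union[OF En(1)] En(3) by blast
        then show "(\<Sum>i\<in>F. norm (g i)) \<le> b"
          using partial[of n] sum_mono2[OF En(2), of F n "\<lambda>i. norm (g i)"] by simp
      qed
    qed simp
  qed
  finally show ?thesis .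
qed

lemma tendsto_sum_finite_exhaustion:
  fixes g :: "'i \<Rightarrow> 'b::{topological_comm_monoid_add,t2_space}"
  assumes En: "incseq En" "\<And>n. finite (En n)" "(\<Union>n. En n) = J"
    and J: "J \<subseteq> I" "\<And>i. i \<in> I - J \<Longrightarrow> g i = 0" and g: "g summable_on I"
  shows "(\<lambda>n. \<Sum>i\<in>En n. g i) \<longlonglongrightarrow> infsum g I"
proof -
  have "g summable_on J \<longleftrightarrow> g summable_on I"
    using J by (intro summable_on_cong_neutral) auto
  with g have "g summable_on J" by simp
  then have "(sum g \<longlongrightarrow> infsum g J) (finite_subsets_at_top J)"
    using has_sum_infsum unfolding has_sum_def by auto
  moreover have "infsum g J = infsum g I"
    using J by (intro infsum_cong_neutral) auto
  ultimately have "(sum g \<longlongrightarrow> infsum g I) (finite_subsets_at_top J)"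
    by simp
  from filterlim_compose[OF this filterlim_incseq_finite_subsets_at_top[OF En]] show ?thesis .
qed

lemma norm_infsum_powr_le_SUP_finite_exhaustion:
  fixes g :: "'i \<Rightarrow> complex"
  assumes En: "incseq En" "\<And>n. finite (En n)" "(\<Union>n. En n) = J"
    and J: "J \<subseteq> I" "\<And>i. i \<in> I - J \<Longrightarrow> g i = 0" and v: "v \<ge> 0" and r: "r > 0"
  shows "ennreal ((v * cmod (infsum g I)) powr r) \<le> (SUP n. ennreal ((v * (\<Sum>i\<in>En n. cmod (g i))) powr r))"
proof (cases "g summable_on I")
  case True
  have "(\<lambda>n. ennreal ((v * cmod (\<Sum>i\<in>En n. g i)) powr r)) \<longlonglongrightarrow> ennreal ((v * cmod (infsum g I)) powr r)"
    using v r by (intro tendsto_ennrealI tendsto_powr' tendsto_mult tendsto_const tendsto_norm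
        tendsto_sum_finite_exhaustion[OF En J True]) auto
  moreover have "ennreal ((v * cmod (\<Sum>i\<in>En n. g i)) powr r)
                 \<le> (SUP n. ennreal ((v * (\<Sum>i\<in>En n. cmod (g i))) powr r))" for n
  proof -
    have "(v * cmod (\<Sum>i\<in>En n. g i)) powr r \<le> (v * (\<Sum>i\<in>En n. cmod (g i))) powr r"
      using v r by (intro powr_mono2 mult_left_mono norm_sum) auto
    then show ?thesis by (meson ennreal_leI SUP_upper UNIV_I order_trans)
  qed
  ultimately show ?thesis by (intro LIMSEQ_le_const2) blast+
qed (simp add: infsum_not_exists)

lemma SUP_ennreal_lt_top_of_SUP_powr:
  fixes T :: "nat \<Rightarrow> real"
  assumes "(SUP n. ennreal ((v * T n) powr r)) < top" "v > 0" "r > 0" "\<And>n. T n \<ge> 0"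
  shows "(SUP n. ennreal (T n)) < top"
proof -
  obtain s where s: "(SUP n. ennreal ((v * T n) powr r)) = ennreal s" "s \<ge> 0"
    using assms(1) less_top_ennreal by blast
  have "T n \<le> s powr (1 / r) / v" for n
  proof -
    have "ennreal ((v * T n) powr r) \<le> (SUP n. ennreal ((v * T n) powr r))"
      by (rule SUP_upper) simp
    then have "(v * T n) powr r \<le> s"
      using s by (simp add: ennreal_le_iff)
    then have "((v * T n) powr r) powr (1 / r) \<le> s powr (1 / r)"
      using assms(3) by (intro powr_mono2) auto
    then show ?thesis
      using assms(2,3) assms(4)[of n] by (simp add: powr_powr le_divide_eq mult.commute)
  qed
  then have "(SUP n. ennreal (T n)) \<le> ennreal (s powr (1 / r) / v)"
    by (intro SUP_least ennreal_leI)
  then show ?thesis by (simp add: order.strict_trans1)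
qed

(* The support is exhausted by finite sets E_n; monotone convergence transfers the bound
   from the partial sums, and the sum is measurable because it is the limit of the partial
   sums where these converge absolutely, and 0 elsewhere. *)
lemma weighted_series_Lr_bound:
  fixes g :: "'i \<Rightarrow> 'a \<Rightarrow> complex" and v :: "'a \<Rightarrow> real"
  assumes J: "countable J" "J \<subseteq> I" "\<And>i y. i \<in> I - J \<Longrightarrow> g i y = 0"
    and g[measurable]: "\<And>i. g i \<in> borel_measurable M"
    and v[measurable]: "v \<in> borel_measurable M" and v_pos: "\<And>y. v y > 0" and r: "r > 0"
    and partial: "\<And>E. finite E \<Longrightarrow> E \<subseteq> I \<Longrightarrow>
      (\<integral>\<^sup>+y. ennreal ((v y * (\<Sum>i\<in>E. cmod (g i y))) powr r) \<partial>M) \<le> ennreal C"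
  shows "AE y in M. (\<lambda>i. cmod (g i y)) summable_on I"
    and "(\<lambda>y. \<Sum>\<^sub>\<infinity>i\<in>I. g i y) \<in> borel_measurable M"
    and "(\<integral>\<^sup>+y. ennreal ((v y * cmod (\<Sum>\<^sub>\<infinity>i\<in>I. g i y)) powr r) \<partial>M) \<le> ennreal C"
proof -
  obtain En where En: "incseq En" "\<And>n. finite (En n)" "(\<Union>n. En n) = J"
    using countable_incseq_finite_exhaustion[OF J(1)] by blast
  have EnI: "En n \<subseteq> I" for n using En(3) J(2) by blast
  define T where "T n y = (\<Sum>i\<in>En n. cmod (g i y))" for n y
  define \<Phi> where "\<Phi> y = (SUP n. ennreal ((v y * T n y) powr r))" for y
  define P where "P y \<longleftrightarrow> (SUP n. ennreal (T n y)) < top" for y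
  have T_nonneg: "T n y \<ge> 0" for n y unfolding T_def by (simp add: sum_nonneg)
  have T_mono: "T n y \<le> T k y" if "n \<le> k" for n k y
    unfolding T_def using En that by (intro sum_mono2) (auto simp: incseq_def)
  have [measurable]: "(\<lambda>y. T n y) \<in> borel_measurable M" for n unfolding T_def by measurable
  have [measurable]: "Measurable.pred M P" unfolding P_def by measurable
  have \<Phi>_integral: "(\<integral>\<^sup>+y. \<Phi> y \<partial>M) \<le> ennreal C"
  proof -
    have "incseq (\<lambda>n y. ennreal ((v y * T n y) powr r))"
      unfolding incseq_def le_fun_def
    proof (intro allI impI ennreal_leI powr_mono2)
      fix n k :: nat and y assume "n \<le> k"
      then show "v y * T n y \<le> v y * T k y"
        using T_mono v_pos[of y] by (simp add: mult_left_mono less_imp_le)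
    qed (use r v_pos T_nonneg in \<open>auto simp: less_imp_le\<close>)
    then show ?thesis
      unfolding \<Phi>_def using partial[OF En(2) EnI]
      by (subst nn_integral_monotone_convergence_SUP) (auto simp: T_def intro!: SUP_least)
  qed
  have summable_iff_P: "(\<lambda>i. cmod (g i y)) summable_on I \<longleftrightarrow> P y" for y
    unfolding P_def T_def by (rule abs_summable_on_iff_SUP_finite_exhaustion[OF En J(2) J(3)])
  have P_if_\<Phi>_finite: "P y" if "\<Phi> y < top" for y
    using that v_pos[of y] r T_nonneg unfolding P_def \<Phi>_def by (rule SUP_ennreal_lt_top_of_SUP_powr)
  show "AE y in M. (\<lambda>i. cmod (g i y)) summable_on I"
  proof -
    have "AE y in M. \<Phi> y \<noteq> \<infinity>"
      using \<Phi>_integral by (intro nn_integral_PInf_AE) (auto simp: \<Phi>_def top_unique)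
    then show ?thesis by eventually_elim (simp add: summable_iff_P P_if_\<Phi>_finite top.not_eq_extremum)
  qed
  have tendsto_S: "(\<lambda>n. \<Sum>i\<in>En n. g i y) \<longlonglongrightarrow> (\<Sum>\<^sub>\<infinity>i\<in>I. g i y)" if "P y" for y
    using that J(3) summable_iff_P[of y]
    by (intro tendsto_sum_finite_exhaustion[OF En J(2)])
       (auto simp: summable_on_iff_abs_summable_on_complex)
  have S_zero: "(\<Sum>\<^sub>\<infinity>i\<in>I. g i y) = 0" if "\<not> P y" for y
    using that summable_iff_P[of y] by (intro infsum_not_exists) (simp add: summable_on_iff_abs_summable_on_complex)
  have S_eq: "(\<lambda>y. \<Sum>\<^sub>\<infinity>i\<in>I. g i y) = (\<lambda>y. if P y then lim (\<lambda>n. \<Sum>i\<in>En n. g i y) else 0)"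
    using tendsto_S S_zero limI by fastforce
  show "(\<lambda>y. \<Sum>\<^sub>\<infinity>i\<in>I. g i y) \<in> borel_measurable M"
    unfolding S_eq by measurable
  have pointwise: "ennreal ((v y * cmod (\<Sum>\<^sub>\<infinity>i\<in>I. g i y)) powr r) \<le> \<Phi> y" for y
    unfolding \<Phi>_def T_def using J(3) v_pos[of y] r
    by (intro norm_infsum_powr_le_SUP_finite_exhaustion[OF En J(2)]) auto
  show "(\<integral>\<^sup>+y. ennreal ((v y * cmod (\<Sum>\<^sub>\<infinity>i\<in>I. g i y)) powr r) \<partial>M) \<le> ennreal C"
    using nn_integral_mono[OF pointwise] \<Phi>_integral by (rule order_trans)
qed

lemma continuous_on_compact_bounded_above:
  fixes f :: "'a::topological_space \<Rightarrow> real"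
  assumes "compact K" "continuous_on K f"
  obtains C where "C > 0" "\<And>x. x \<in> K \<Longrightarrow> f x \<le> C"
proof -
  obtain B where B: "\<And>x. x \<in> K \<Longrightarrow> norm (f x) \<le> B"
    using compact_imp_bounded[OF compact_continuous_image[OF assms(2,1)]] unfolding bounded_iff by blast
  show ?thesis
  proof (rule that[of "max B 1"])
    fix x assume "x \<in> K"
    then have "f x \<le> B" using B[of x] by simp
    then show "f x \<le> max B 1" by simp
  qed simp
qed

lemma localized_coefficient_powr_le:
  fixes f :: "'a \<Rightarrow> complex" and \<phi> m :: "'a \<Rightarrow> real"
  assumes E: "E \<in> sets M" "emeasure M E < \<infinity>" "measure M E > 0"
    and f[measurable]: "f \<in> borel_measurable M" and fr: "integrable M (\<lambda>y. (m y * cmod (f y)) powr r)"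
    and m[measurable]: "m \<in> borel_measurable M" and m_pos: "\<And>y. m y > 0"
    and \<phi>[measurable]: "\<phi> \<in> borel_measurable M"
    and \<phi>_range: "\<And>y. 0 \<le> \<phi> y \<and> \<phi> y \<le> 1" and \<phi>_supp: "\<And>y. y \<notin> E \<Longrightarrow> \<phi> y = 0"
    and a: "a > 0" "\<And>y. y \<in> E \<Longrightarrow> a \<le> C * m y" and C: "C > 0" and r: "r > 1"
  shows "integrable M (\<lambda>y. f y * cnj (complex_of_real (\<phi> y)))"
    and "(a * cmod (\<integral>y. f y * cnj (complex_of_real (\<phi> y)) \<partial>M)) powr r
           \<le> C powr r * (2 powr r * measure M E powr (r - 1)) * (\<integral>y. indicator E y * (m y * cmod (f y)) powr r \<partial>M)"
proof -
  define g where "g y = m y * cmod (f y)" for y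
  have g_nonneg: "g y \<ge> 0" for y unfolding g_def using m_pos[of y] by simp
  have [measurable]: "g \<in> borel_measurable M" unfolding g_def by measurable
  have gr_int: "integrable M (\<lambda>y. indicator E y * g y powr r)"
    using integrable_real_mult_indicator[OF E(1) fr] unfolding g_def by (simp add: mult.commute)
  note local_holder = integral_indicator_mult_powr_le[OF E _ g_nonneg gr_int r]
  have pointwise: "cmod (f y * cnj (complex_of_real (\<phi> y))) \<le> C / a * (indicator E y * g y)" for y
  proof (cases "y \<in> E")
    case True
    have "cmod (f y * cnj (complex_of_real (\<phi> y))) \<le> cmod (f y)"
      using \<phi>_range[of y] by (simp add: norm_mult mult_left_le)
    also have "\<dots> \<le> C / a * g y"
    proof -
      have "cmod (f y) * a \<le> cmod (f y) * (C * m y)"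
        using a(2)[OF True] by (simp add: mult_left_mono)
      then show ?thesis
        using a(1) unfolding g_def by (simp add: field_simps)
    qed
    finally show ?thesis using True by simp
  qed (simp add: \<phi>_supp)
  show c_int: "integrable M (\<lambda>y. f y * cnj (complex_of_real (\<phi> y)))"
  proof (rule Bochner_Integration.integrable_bound[OF integrable_mult_right[OF local_holder(1), of "C / a"]])
    show "AE y in M. norm (f y * cnj (complex_of_real (\<phi> y))) \<le> norm (C / a * (indicator E y * g y))"
      using pointwise by (intro AE_I2) (metis abs_ge_self order_trans real_norm_def)
  qed (simp_all add: complex_cnj_complex_of_real)
  have "a * cmod (\<integral>y. f y * cnj (complex_of_real (\<phi> y)) \<partial>M) \<le> a * (\<integral>y. C / a * (indicator E y * g y) \<partial>M)"
    using pointwise a(1) c_int local_holder(1)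
    by (intro mult_left_mono order_trans[OF integral_norm_bound] integral_mono) auto
  also have "\<dots> = C * (\<integral>y. indicator E y * g y \<partial>M)"
    using a(1) by simp
  finally have "(a * cmod (\<integral>y. f y * cnj (complex_of_real (\<phi> y)) \<partial>M)) powr r
                \<le> (C * (\<integral>y. indicator E y * g y \<partial>M)) powr r"
    using a(1) r by (intro powr_mono2) auto
  also have "\<dots> = C powr r * (\<integral>y. indicator E y * g y \<partial>M) powr r"
    using C g_nonneg by (simp add: powr_mult Bochner_Integration.integral_nonneg)
  also have "\<dots> \<le> C powr r * (2 powr r * measure M E powr (r - 1) * (\<integral>y. indicator E y * g y powr r \<partial>M))"
    using local_holder(2) by (intro mult_left_mono) auto
  finally show "(a * cmod (\<integral>y. f y * cnj (complex_of_real (\<phi> y)) \<partial>M)) powr r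
      \<le> C powr r * (2 powr r * measure M E powr (r - 1)) * (\<integral>y. indicator E y * (m y * cmod (f y)) powr r \<partial>M)"
    unfolding g_def by (simp add: mult_ac)
qed

lemma moderate_translate_bound:
  fixes w m :: "'g::{group_add,topological_space} \<Rightarrow> real"
  assumes w: "sym_submult_weight w" and m: "moderate w m" and U: "compact U"
  obtains C where "C > 0" "\<And>a u. u \<in> U \<Longrightarrow> m a \<le> C * m (a + u)"
proof -
  obtain C where C: "C > 0" "\<And>u. u \<in> U \<Longrightarrow> w u \<le> C"
    using continuous_on_compact_bounded_above[OF U] w unfolding sym_submult_weight_def
    by (metis continuous_on_subset subset_UNIV)
  show ?thesis
  proof (rule that[OF C(1)])
    fix a u assume u: "u \<in> U"
    have "m a \<le> m (a + u) * w (- u)"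
      using m unfolding moderate_def by (metis add.assoc add.right_inverse add_0_right)
    also have "\<dots> \<le> m (a + u) * C"
      using C(2)[OF u] w m unfolding sym_submult_weight_def moderate_def
      by (metis less_imp_le mult_left_mono)
    finally show "m a \<le> C * m (a + u)" by (simp add: mult.commute)
  qed
qed

lemma moderate_sum_translates_powr_le:
  fixes w m :: "'g::{group_add,topological_space} \<Rightarrow> real" and W :: "'g \<Rightarrow> complex"
    and c :: "'i \<Rightarrow> complex" and x :: "'i \<Rightarrow> 'g"
  assumes m: "moderate w m" and E: "finite E" and B: "B > 0"
    "(\<Sum>i\<in>E. w (- x i + y) * cmod (W (- x i + y))) \<le> B" and r: "r > 1"
  shows "(m y * (\<Sum>i\<in>E. cmod (c i * W (- x i + y)))) powr r
    \<le> 2 powr r * B powr (r - 1) *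
      (\<Sum>i\<in>E. (m (x i) * cmod (c i)) powr r * (w (- x i + y) * cmod (W (- x i + y))))"
proof -
  have m_pos: "\<And>y. m y > 0" and m_mod: "\<And>a b. m (a + b) \<le> m a * w b"
    using m unfolding moderate_def by auto
  have w_pos: "w b > 0" for b
  proof -
    have "0 < m 0 * w b" using m_mod[of 0 b] m_pos[of b] by simp
    then show ?thesis using m_pos[of 0] by (simp add: zero_less_mult_iff)
  qed
  have "m y * (\<Sum>i\<in>E. cmod (c i * W (- x i + y)))
        \<le> (\<Sum>i\<in>E. m (x i) * cmod (c i) * (w (- x i + y) * cmod (W (- x i + y))))"
    unfolding sum_distrib_left
  proof (rule sum_mono)
    fix i
    have "m y \<le> m (x i) * w (- x i + y)"
      using m_mod[of "x i" "- x i + y"] by (simp add: add.assoc[symmetric])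
    then have "m y * (cmod (c i) * cmod (W (- x i + y)))
               \<le> m (x i) * w (- x i + y) * (cmod (c i) * cmod (W (- x i + y)))"
      by (intro mult_right_mono) auto
    then show "m y * cmod (c i * W (- x i + y))
               \<le> m (x i) * cmod (c i) * (w (- x i + y) * cmod (W (- x i + y)))"
      unfolding norm_mult by (simp add: mult_ac)
  qed
  then have "(m y * (\<Sum>i\<in>E. cmod (c i * W (- x i + y)))) powr r
             \<le> (\<Sum>i\<in>E. m (x i) * cmod (c i) * (w (- x i + y) * cmod (W (- x i + y)))) powr r"
    using m_pos[of y] r by (intro powr_mono2) (auto intro!: sum_nonneg mult_nonneg_nonneg)
  also have "\<dots> \<le> 2 powr r * B powr (r - 1) *
      (\<Sum>i\<in>E. (m (x i) * cmod (c i)) powr r * (w (- x i + y) * cmod (W (- x i + y))))"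
    using m_pos w_pos B r by (intro sum_mult_powr_le E) (auto simp: less_imp_le)
  finally show ?thesis .
qed

lemma Lpv_one_integrable:
  assumes "f \<in> Lpv M 1 v" "\<And>y. v y \<ge> 0"
  shows "integrable M (\<lambda>y. v y * cmod (f y))"
  using assms unfolding Lpv_def by simp

locale haar_group =
  fixes \<mu> :: "'g::{group_add,t2_space,second_countable_topology} measure" and \<Delta> :: "'g \<Rightarrow> real"
  assumes lc_haar: "lc_haar_group \<mu> \<Delta>"
begin

lemma sets_eq_borel [simp, measurable_cong]: "sets \<mu> = sets borel"
  using lc_haar unfolding lc_haar_group_def by (elim conjE)

lemma space_eq_UNIV [simp]: "space \<mu> = UNIV"
  using sets_eq_imp_space_eq[OF sets_eq_borel] by simp

lemma continuous_on_add:
  assumes "continuous_on S f" "continuous_on S g"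
  shows "continuous_on S (\<lambda>y. f y + (g y :: 'g))"
proof -
  have "continuous_on UNIV (\<lambda>p::'g \<times> 'g. fst p + snd p)"
    using lc_haar unfolding lc_haar_group_def by (elim conjE)
  then have "continuous_on S ((\<lambda>p::'g \<times> 'g. fst p + snd p) \<circ> (\<lambda>y. (f y, g y)))"
    by (intro continuous_on_compose continuous_on_Pair assms) (auto elim: continuous_on_subset)
  then show ?thesis by (simp add: o_def)
qed

lemma continuous_on_minus:
  assumes "continuous_on S f"
  shows "continuous_on S (\<lambda>y. - (f y :: 'g))"
proof -
  have "continuous_on UNIV (uminus :: 'g \<Rightarrow> 'g)"
    using lc_haar unfolding lc_haar_group_def by (elim conjE)
  then have "continuous_on S (uminus \<circ> f)"
    by (intro continuous_on_compose assms) (auto elim: continuous_on_subset)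
  then show ?thesis by (simp add: o_def)
qed

lemma continuous_on_add_left: "continuous_on S (\<lambda>y. a + (y::'g))"
  and continuous_on_add_right: "continuous_on S (\<lambda>y. (y::'g) + a)"
  by (intro continuous_on_add continuous_on_const continuous_on_id)+

lemma measurable_add_left [measurable]: "(\<lambda>y. a + (y::'g)) \<in> borel_measurable borel"
  by (rule borel_measurable_continuous_onI[OF continuous_on_add_left])

lemma image_add_right_eq_vimage: "(\<lambda>q. q + a) ` V = (\<lambda>y. y + (-a::'g)) -` V"
  by (auto simp: add.assoc intro: image_eqI[where x="_ + - a"])

lemma image_add_left_eq_vimage: "(\<lambda>q. a + q) ` V = (\<lambda>y. (-a::'g) + y) -` V"
  by (auto simp: add.assoc[symmetric] intro: image_eqI[where x="- a + _"])

lemma image_uminus_eq_vimage: "uminus ` V = (uminus::'g \<Rightarrow> 'g) -` V"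
  by (auto intro: image_eqI[where x="- _"])

lemma open_image_add_right: "open V \<Longrightarrow> open ((\<lambda>q. q + (a::'g)) ` V)"
  unfolding image_add_right_eq_vimage by (rule open_vimage[OF _ continuous_on_add_right])

lemma open_image_uminus: "open V \<Longrightarrow> open (uminus ` (V::'g set))"
  unfolding image_uminus_eq_vimage by (rule open_vimage[OF _ continuous_on_minus[OF continuous_on_id]])

lemma compact_image_add_right: "compact V \<Longrightarrow> compact ((\<lambda>q. q + (a::'g)) ` V)"
  and compact_image_add_left: "compact V \<Longrightarrow> compact ((\<lambda>q. (a::'g) + q) ` V)"
  by (intro compact_continuous_image continuous_on_add_right continuous_on_add_left; assumption)+

lemma sets_image_add_right: "A \<in> sets borel \<Longrightarrow> (\<lambda>y. y + (a::'g)) ` A \<in> sets borel"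
  using measurable_sets[OF borel_measurable_continuous_onI[OF continuous_on_add_right[of UNIV "-a"]], of A]
  by (simp add: image_add_right_eq_vimage)

lemma emeasure_image_add_left: "A \<in> sets borel \<Longrightarrow> emeasure \<mu> ((\<lambda>y. a + y) ` A) = emeasure \<mu> A"
  and emeasure_image_add_right:
    "A \<in> sets borel \<Longrightarrow> emeasure \<mu> ((\<lambda>y. y + a) ` A) = ennreal (\<Delta> a) * emeasure \<mu> A"
  and emeasure_compact_finite: "compact C \<Longrightarrow> emeasure \<mu> C < \<infinity>"
  and emeasure_open_pos: "open V \<Longrightarrow> V \<noteq> {} \<Longrightarrow> emeasure \<mu> V > 0"
  and modular_pos: "\<Delta> a > 0"
  using lc_haar unfolding lc_haar_group_def by (elim conjE; simp)+

lemma compact_neighbourhood_of_zero: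
  obtains U K :: "'g set" where "open U" "0 \<in> U" "U \<subseteq> K" "compact K"
proof -
  have "locally_compact_space (euclidean :: 'g topology)"
    using lc_haar unfolding lc_haar_group_def by (elim conjE)
  then have "\<forall>x::'g. \<exists>U. open U \<and> (\<exists>K. compact K \<and> x \<in> U \<and> U \<subseteq> K)"
    unfolding locally_compact_space_def by simp
  then show ?thesis
    using that by blast
qed

lemma nn_integral_add_left:
  assumes [measurable]: "h \<in> borel_measurable borel"
  shows "(\<integral>\<^sup>+y. h (a + y) \<partial>\<mu>) = (\<integral>\<^sup>+y. h y \<partial>\<mu>)"
proof -
  have "distr \<mu> \<mu> (\<lambda>y. a + y) = \<mu>"
  proof (rule measure_eqI)
    fix A assume "A \<in> sets (distr \<mu> \<mu> (\<lambda>y. a + y))"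
    then have A: "A \<in> sets borel" by simp
    have "(\<lambda>y. a + y) -` A = (\<lambda>y. -a + y) ` A"
      using image_add_left_eq_vimage[of "-a" A] by simp
    then show "emeasure (distr \<mu> \<mu> (\<lambda>y. a + y)) A = emeasure \<mu> A"
      using A by (simp add: emeasure_distr emeasure_image_add_left)
  qed simp
  then show ?thesis
    using nn_integral_distr[of "\<lambda>y. a + y" \<mu> \<mu> h] by simp
qed

lemma integral_add_left:
  fixes F :: "'g \<Rightarrow> real"
  assumes [measurable]: "F \<in> borel_measurable borel" and F: "\<And>z. F z \<ge> 0" "integrable \<mu> F"
  shows "integrable \<mu> (\<lambda>y. F (a + y))" "(\<integral>y. F (a + y) \<partial>\<mu>) = (\<integral>y. F y \<partial>\<mu>)"
proof -
  have nn: "(\<integral>\<^sup>+y. ennreal (F (a + y)) \<partial>\<mu>) = ennreal (\<integral>y. F y \<partial>\<mu>)"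
    using nn_integral_add_left[of "\<lambda>y. ennreal (F y)"] nn_integral_eq_integral[OF F(2)] F(1) by simp
  show "integrable \<mu> (\<lambda>y. F (a + y))"
    using nn F(1) by (intro integrableI_bounded) auto
  show "(\<integral>y. F (a + y) \<partial>\<mu>) = (\<integral>y. F y \<partial>\<mu>)"
    using nn F(1) by (subst integral_eq_nn_integral) (auto intro: Bochner_Integration.integral_nonneg)
qed

lemma modular_add: "\<Delta> (a + b) = \<Delta> a * \<Delta> b"
proof -
  obtain U K :: "'g set" where UK: "open U" "0 \<in> U" "U \<subseteq> K" "compact K"
    by (rule compact_neighbourhood_of_zero)
  have K: "K \<in> sets borel" using UK(4) by (simp add: borel_compact)
  define k where "k = measure \<mu> K"
  have k_eq: "emeasure \<mu> K = ennreal k"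
    unfolding k_def using emeasure_compact_finite[OF UK(4)] by (intro emeasure_eq_ennreal_measure) simp
  have "0 < emeasure \<mu> U" using emeasure_open_pos[OF UK(1)] UK(2) by blast
  also have "\<dots> \<le> emeasure \<mu> K" using UK(3) K by (intro emeasure_mono) auto
  finally have k_pos: "k > 0" unfolding k_eq by simp
  have "ennreal (\<Delta> (a + b) * k) = emeasure \<mu> ((\<lambda>y. y + (a + b)) ` K)"
    unfolding emeasure_image_add_right[OF K] k_eq using modular_pos[of "a + b"] k_pos
    by (simp add: ennreal_mult)
  also have "(\<lambda>y. y + (a + b)) ` K = (\<lambda>y. y + b) ` ((\<lambda>y. y + a) ` K)"
    by (simp add: image_image add.assoc)
  also have "emeasure \<mu> \<dots> = ennreal (\<Delta> b * (\<Delta> a * k))"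
    unfolding emeasure_image_add_right[OF sets_image_add_right[OF K]] emeasure_image_add_right[OF K] k_eq
    using modular_pos[of a] modular_pos[of b] k_pos by (simp add: ennreal_mult)
  finally have "\<Delta> (a + b) * k = \<Delta> b * (\<Delta> a * k)"
    using modular_pos[of "a + b"] modular_pos[of a] modular_pos[of b] k_pos by (simp add: ennreal_inj)
  then show ?thesis using k_pos by simp
qed

(* For v in Q, V v^{-1} lies in the compact set K Q^{-1}, and mu V = Delta v * mu (V v^{-1}). *)
lemma modular_lower_bound:
  assumes Q: "compact Q"
  obtains c where "c > 0" "\<And>v. v \<in> Q \<Longrightarrow> c \<le> \<Delta> v"
proof -
  obtain V K :: "'g set" where VK: "open V" "0 \<in> V" "V \<subseteq> K" "compact K"
    by (rule compact_neighbourhood_of_zero)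
  define D where "D = (\<lambda>p. fst p + - snd p) ` (K \<times> Q)"
  have "compact D" unfolding D_def
    using VK(4) Q by (intro compact_continuous_image compact_Times continuous_on_add continuous_on_minus
        continuous_on_fst continuous_on_snd continuous_on_id)
  then have D: "D \<in> sets borel" "emeasure \<mu> D = ennreal (measure \<mu> D)"
    using emeasure_compact_finite[of D] by (auto simp: borel_compact intro!: emeasure_eq_ennreal_measure)
  have V: "V \<in> sets borel" using VK(1) by simp
  have "emeasure \<mu> V \<le> emeasure \<mu> K" using VK(3,4) by (intro emeasure_mono) (auto simp: borel_compact)
  then have V_fin: "emeasure \<mu> V < \<infinity>"
    using emeasure_compact_finite[OF VK(4)] by simp
  then have V_meas: "emeasure \<mu> V = ennreal (measure \<mu> V)"
    by (intro emeasure_eq_ennreal_measure) simp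
  moreover have "emeasure \<mu> V > 0"
    using emeasure_open_pos[OF VK(1)] VK(2) by blast
  ultimately have V_pos: "measure \<mu> V > 0" by simp
  define c where "c = measure \<mu> V / (measure \<mu> D + 1)"
  show ?thesis
  proof (rule that[of c])
    show "c > 0" unfolding c_def using V_pos by (simp add: add_nonneg_pos)
    fix v assume v: "v \<in> Q"
    have VvD: "(\<lambda>y. y + - v) ` V \<subseteq> D"
    proof
      fix z assume "z \<in> (\<lambda>y. y + - v) ` V"
      then obtain y where "y \<in> V" "z = y + - v" by blast
      then show "z \<in> D"
        unfolding D_def using VK(3) v by (intro image_eqI[where x="(y, v)"]) auto
    qed
    have shift: "(\<lambda>y. y + v) ` ((\<lambda>y. y + - v) ` V) = V"
      by (simp add: image_image add.assoc)
    have "emeasure \<mu> V = ennreal (\<Delta> v) * emeasure \<mu> ((\<lambda>y. y + - v) ` V)"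
      using emeasure_image_add_right[OF sets_image_add_right[OF V, of "- v"], of v] unfolding shift .
    also have "\<dots> \<le> ennreal (\<Delta> v) * emeasure \<mu> D"
      using VvD D by (intro mult_left_mono emeasure_mono) auto
    also have "\<dots> = ennreal (\<Delta> v * measure \<mu> D)"
      unfolding D(2) using modular_pos[of v] by (simp add: ennreal_mult)
    finally have "measure \<mu> V \<le> \<Delta> v * measure \<mu> D"
      unfolding V_meas using modular_pos[of v] by (simp add: ennreal_le_iff)
    also have "\<dots> \<le> \<Delta> v * (measure \<mu> D + 1)"
      using modular_pos[of v] by simp
    finally show "c \<le> \<Delta> v"
      unfolding c_def by (simp add: divide_le_eq add_nonneg_pos)
  qed
qed

lemma norm_le_locmax:
  assumes Q: "compact Q" and W: "continuous_on UNIV W"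
    and z: "z \<in> (\<lambda>q. q + z') ` interior Q"
  shows "cmod (W z) \<le> locmax \<mu> Q W z'"
proof (rule ccontr)
  define K where "K = (\<lambda>q. q + z') ` Q"
  define g where "g = (\<lambda>y. ereal (indicator K y * cmod (W y)))"
  define e where "e = esssup \<mu> g"
  assume "\<not> cmod (W z) \<le> locmax \<mu> Q W z'"
  then have less: "real_of_ereal e < cmod (W z)"
    by (simp add: locmax_def e_def g_def K_def)
  have "compact K" unfolding K_def by (rule compact_image_add_right[OF Q])
  have [measurable]: "W \<in> borel_measurable borel" by (rule borel_measurable_continuous_onI[OF W])
  have "K \<in> sets borel" using \<open>compact K\<close> by (simp add: borel_compact)
  then have g_meas: "g \<in> borel_measurable \<mu>" unfolding g_def by measurable
  obtain B where B: "\<And>y. y \<in> K \<Longrightarrow> cmod (W y) \<le> B"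
    using compact_imp_bounded[OF compact_continuous_image[OF continuous_on_subset[OF W] \<open>compact K\<close>]]
    unfolding bounded_iff by auto
  have "e \<le> ereal (max B 0)"
    unfolding e_def
  proof (intro esssup_I[OF g_meas] AE_I2)
    show "g y \<le> ereal (max B 0)" for y
      using B[of y] by (auto simp: g_def indicator_def le_max_iff_disj)
  qed
  then have e_not_top: "e \<noteq> \<infinity>" by (auto simp: max_def)
  define A where "A = (\<lambda>q. q + z') ` interior Q \<inter> {y. real_of_ereal e < cmod (W y)}"
  have "open {y. real_of_ereal e < cmod (W y)}"
    using continuous_on_norm[OF W] by (simp add: open_Collect_less continuous_on_const)
  then have "open A" unfolding A_def by (intro open_Int open_image_add_right) auto
  moreover have "z \<in> A" unfolding A_def using z less by auto
  ultimately have "emeasure \<mu> A > 0" using emeasure_open_pos by blast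
  moreover have "AE y in \<mu>. y \<notin> A"
    using esssup_AE[of g \<mu>]
  proof eventually_elim
    fix y assume "g y \<le> esssup \<mu> g"
    moreover have "y \<in> A \<Longrightarrow> g y = ereal (cmod (W y))"
      unfolding A_def K_def g_def using interior_subset by (auto simp: indicator_def)
    ultimately show "y \<notin> A"
      using e_not_top unfolding A_def e_def by (cases "esssup \<mu> g") auto
  qed
  ultimately show False
    using \<open>open A\<close> by (simp add: AE_iff_measurable[OF _ refl])
qed

lemma norm_le_abs_locmax:
  assumes Q: "unit_nbhd Q" and W: "continuous_on UNIV W"
  shows "cmod (W z) \<le> \<bar>locmax \<mu> Q W z\<bar>"
proof -
  have "z \<in> (\<lambda>q. q + z) ` interior Q"
    using Q unfolding unit_nbhd_def by (intro image_eqI[where x=0]) simp_all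
  then show ?thesis
    using norm_le_locmax[OF _ W] Q unfolding unit_nbhd_def by fastforce
qed

lemma emeasure_translate_neg_interior:
  assumes Q: "unit_nbhd Q"
  obtains c where "c > 0" "\<And>z. emeasure \<mu> ((\<lambda>y. y + z) ` uminus ` interior Q) = ennreal (\<Delta> z * c)"
proof -
  define V where "V = uminus ` interior Q"
  have Qc: "compact Q" and Q0: "0 \<in> interior Q" using Q unfolding unit_nbhd_def by auto
  have V_open: "open V" unfolding V_def by (intro open_image_uminus) simp
  have "compact (uminus ` Q)"
    using Qc by (intro compact_continuous_image continuous_on_minus continuous_on_id)
  then have "emeasure \<mu> V \<le> emeasure \<mu> (uminus ` Q)"
    unfolding V_def using interior_subset by (intro emeasure_mono image_mono) (auto simp: borel_compact)
  also have "\<dots> < \<infinity>"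
    using emeasure_compact_finite \<open>compact (uminus ` Q)\<close> by blast
  finally have V_meas: "emeasure \<mu> V = ennreal (measure \<mu> V)"
    by (intro emeasure_eq_ennreal_measure) simp
  moreover have "0 \<in> V"
    unfolding V_def using Q0 by (intro image_eqI[where x=0]) simp_all
  then have "emeasure \<mu> V > 0"
    using emeasure_open_pos[OF V_open] by blast
  ultimately have "measure \<mu> V > 0" by simp
  then show ?thesis
  proof (rule that)
    fix z
    have "emeasure \<mu> ((\<lambda>y. y + z) ` V) = ennreal (\<Delta> z) * ennreal (measure \<mu> V)"
      using emeasure_image_add_right[OF borel_open[OF V_open], of z] V_meas by simp
    then show "emeasure \<mu> ((\<lambda>y. y + z) ` uminus ` interior Q) = ennreal (\<Delta> z * measure \<mu> V)"
      using modular_pos[of z] unfolding V_def by (simp add: ennreal_mult)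
  qed
qed

lemma weighted_norm_le_nearby_locmax:
  fixes w :: "'g \<Rightarrow> real" and W :: "'g \<Rightarrow> complex"
  assumes w: "sym_submult_weight w" and Q: "unit_nbhd Q" and W: "continuous_on UNIV W"
  obtains C where "C > 0" "\<And>z v. v \<in> interior Q \<Longrightarrow>
    w z * cmod (W z) \<le> C * \<Delta> z * (w (- v + z) / \<Delta> (- v + z) * \<bar>locmax \<mu> Q W (- v + z)\<bar>)"
proof -
  have Qc: "compact Q" using Q unfolding unit_nbhd_def by auto
  have w_pos: "\<And>y. w y > 0" and w_sub: "\<And>a b. w (a + b) \<le> w a * w b"
    using w unfolding sym_submult_weight_def by auto
  obtain Cw where Cw: "Cw > 0" "\<And>q. q \<in> Q \<Longrightarrow> w q \<le> Cw"
    using continuous_on_compact_bounded_above[OF Qc] w unfolding sym_submult_weight_def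
    by (metis continuous_on_subset subset_UNIV)
  obtain cD where cD: "cD > 0" "\<And>v. v \<in> Q \<Longrightarrow> cD \<le> \<Delta> v"
    using modular_lower_bound[OF Qc] by blast
  show ?thesis
  proof (rule that[of "Cw / cD"])
    show "Cw / cD > 0" using Cw(1) cD(1) by simp
    fix z v assume v: "v \<in> interior Q"
    define z' where "z' = - v + z"
    have z: "z = v + z'" unfolding z'_def by (simp add: add.assoc[symmetric])
    have vQ: "v \<in> Q" using v interior_subset by blast
    have "z \<in> (\<lambda>q. q + z') ` interior Q"
      using v z by blast
    then have "cmod (W z) \<le> \<bar>locmax \<mu> Q W z'\<bar>"
      using norm_le_locmax[OF Qc W] by fastforce
    moreover have "w z \<le> Cw * w z'"
      using w_sub[of v z'] Cw(2)[OF vQ] w_pos[of z'] z by (simp add: mult_right_mono order_trans)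
    ultimately have "w z * cmod (W z) \<le> Cw * w z' * \<bar>locmax \<mu> Q W z'\<bar>"
      using w_pos[of z] by (intro mult_mono) auto
    also have "\<dots> \<le> Cw * w z' * \<bar>locmax \<mu> Q W z'\<bar> * (\<Delta> v / cD)"
    proof -
      have "1 \<le> \<Delta> v / cD" using cD(1) cD(2)[OF vQ] by simp
      moreover have "Cw * w z' * \<bar>locmax \<mu> Q W z'\<bar> \<ge> 0" using Cw(1) w_pos[of z'] by simp
      ultimately show ?thesis using mult_left_mono by fastforce
    qed
    also have "\<dots> = Cw / cD * \<Delta> z * (w z' / \<Delta> z' * \<bar>locmax \<mu> Q W z'\<bar>)"
      using modular_pos[of z'] unfolding z modular_add by (simp add: field_simps)
    finally show "w z * cmod (W z) \<le> Cw / cD * \<Delta> z * (w z' / \<Delta> z' * \<bar>locmax \<mu> Q W z'\<bar>)" .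
  qed
qed

lemma weighted_norm_le_local_integral:
  fixes w :: "'g \<Rightarrow> real" and W :: "'g \<Rightarrow> complex" and Q :: "'g set"
  defines "H \<equiv> \<lambda>z. w z / \<Delta> z * \<bar>locmax \<mu> Q W z\<bar>"
  assumes w: "sym_submult_weight w" and Q: "unit_nbhd Q" and W: "continuous_on UNIV W"
    and H_int: "integrable \<mu> H"
  obtains \<kappa> where "\<kappa> > 0"
    "\<And>z. w z * cmod (W z) * \<kappa> \<le> (\<integral>z'. indicator ((\<lambda>y. y + z) ` uminus ` interior Q) z' * H z' \<partial>\<mu>)"
proof -
  define S where "S z = (\<lambda>y. y + z) ` uminus ` interior Q" for z
  obtain C where C: "C > 0" "\<And>z v. v \<in> interior Q \<Longrightarrow> w z * cmod (W z) \<le> C * \<Delta> z * H (- v + z)"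
    using weighted_norm_le_nearby_locmax[OF w Q W] unfolding H_def by blast
  obtain c where c: "c > 0" "\<And>z. emeasure \<mu> (S z) = ennreal (\<Delta> z * c)"
    using emeasure_translate_neg_interior[OF Q] unfolding S_def by blast
  have S_sets: "S z \<in> sets borel" for z
    unfolding S_def by (intro borel_open open_image_add_right open_image_uminus) simp
  have S_measure: "measure \<mu> (S z) = \<Delta> z * c" for z
    unfolding measure_def c(2) using modular_pos[of z] c(1) by simp
  have pointwise: "w z * cmod (W z) \<le> C * \<Delta> z * H z'" if z': "z' \<in> S z" for z z'
  proof -
    obtain v where "v \<in> interior Q" "z' = - v + z" using z' unfolding S_def by auto
    then show ?thesis using C(2) by blast
  qed
  show ?thesis
  proof (rule that[of "c / C"])
    show "c / C > 0" using C(1) c(1) by simp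
    fix z
    have ind_int: "integrable \<mu> (\<lambda>z'. indicator (S z) z' * w z * cmod (W z))"
      using S_sets c(2) by (intro integrable_mult_left integrable_real_indicator) auto
    have ind_H_int: "integrable \<mu> (\<lambda>z'. indicator (S z) z' * (C * \<Delta> z * H z'))"
      using integrable_real_mult_indicator[OF _ integrable_mult_right[OF H_int], of "S z" "C * \<Delta> z"] S_sets
      by (simp add: mult_ac)
    have "w z * cmod (W z) * (C * \<Delta> z) * (c / C) = (\<integral>z'. indicator (S z) z' * w z * cmod (W z) \<partial>\<mu>)"
      using S_sets S_measure C(1) by simp
    also have "\<dots> \<le> (\<integral>z'. indicator (S z) z' * (C * \<Delta> z * H z') \<partial>\<mu>)"
      using pointwise by (intro integral_mono[OF ind_int ind_H_int]) (simp add: indicator_def)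
    also have "\<dots> = C * \<Delta> z * (\<integral>z'. indicator (S z) z' * H z' \<partial>\<mu>)"
      by (simp add: mult.left_commute)
    finally have "w z * cmod (W z) * (c / C) \<le> (\<integral>z'. indicator (S z) z' * H z' \<partial>\<mu>)"
      using C(1) modular_pos[of z] by (simp add: mult_ac pos_divide_le_eq)
    then show "w z * cmod (W z) * (c / C)
               \<le> (\<integral>z'. indicator ((\<lambda>y. y + z) ` uminus ` interior Q) z' * H z' \<partial>\<mu>)"
      unfolding S_def .
  qed
qed

(* Each term is dominated by an average of the integrable H over a right translate of
   (int Q)^{-1}; by bounded overlap these translates cover every point at most N times. *)
lemma sum_translates_bounded:
  fixes w :: "'g \<Rightarrow> real" and W :: "'g \<Rightarrow> complex" and x :: "'i \<Rightarrow> 'g"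
  assumes w: "sym_submult_weight w" and Q: "unit_nbhd Q" and W: "continuous_on UNIV W"
    and H_int: "integrable \<mu> (\<lambda>z. w z / \<Delta> z * \<bar>locmax \<mu> Q W z\<bar>)"
    and X: "rel_separated I x"
  obtains B where "B > 0"
    "\<And>y E. finite E \<Longrightarrow> E \<subseteq> I \<Longrightarrow> (\<Sum>i\<in>E. w (- x i + y) * cmod (W (- x i + y))) \<le> B"
proof -
  define H where "H = (\<lambda>z. w z / \<Delta> z * \<bar>locmax \<mu> Q W z\<bar>)"
  define S where "S z = (\<lambda>y. y + z) ` uminus ` interior Q" for z
  obtain \<kappa> where \<kappa>: "\<kappa> > 0" "\<And>z. w z * cmod (W z) * \<kappa> \<le> (\<integral>z'. indicator (S z) z' * H z' \<partial>\<mu>)"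
    using weighted_norm_le_local_integral[OF w Q W H_int] unfolding S_def H_def by blast
  obtain N :: nat where N: "\<And>t. finite {i\<in>I. t \<in> (\<lambda>q. x i + q) ` Q}"
    "\<And>t. card {i\<in>I. t \<in> (\<lambda>q. x i + q) ` Q} \<le> N"
    using X Q unfolding rel_separated_def by blast
  have H_nonneg: "H z \<ge> 0" for z
    using w modular_pos[of z] unfolding H_def sym_submult_weight_def by (simp add: less_imp_le)
  have S_sets: "S z \<in> sets \<mu>" for z
    unfolding S_def using Q unfolding unit_nbhd_def
    by (simp add: open_image_add_right open_image_uminus borel_open)
  have overlap: "{i\<in>I. z' \<in> S (- x i + y)} \<subseteq> {i\<in>I. y + - z' \<in> (\<lambda>q. x i + q) ` Q}" for y z'
  proof safe
    fix i assume "i \<in> I" "z' \<in> S (- x i + y)"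
    then obtain v where v: "v \<in> interior Q" "z' = - v + (- x i + y)" unfolding S_def by auto
    then have "y + - z' = x i + v" by (simp add: minus_add add.assoc)
    then show "y + - z' \<in> (\<lambda>q. x i + q) ` Q" using v(1) interior_subset by auto
  qed
  define B where "B = max (N * (\<integral>z. H z \<partial>\<mu>) / \<kappa>) 1"
  show ?thesis
  proof (rule that[of B])
    show "B > 0" unfolding B_def by simp
    fix y E assume E: "finite E" "E \<subseteq> I"
    have "(\<Sum>i\<in>E. w (- x i + y) * cmod (W (- x i + y))) * \<kappa>
          \<le> (\<Sum>i\<in>E. \<integral>z'. indicator (S (- x i + y)) z' * H z' \<partial>\<mu>)"
      unfolding sum_distrib_right by (intro sum_mono \<kappa>(2))
    also have "\<dots> \<le> N * (\<integral>z. H z \<partial>\<mu>)"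
      using E S_sets H_int[folded H_def] H_nonneg
        finite_subset[OF overlap N(1)] le_trans[OF card_mono[OF N(1) overlap] N(2)]
      by (intro sum_integral_indicator_le) auto
    finally show "(\<Sum>i\<in>E. w (- x i + y) * cmod (W (- x i + y))) \<le> B"
      using \<kappa>(1) unfolding B_def by (simp add: pos_le_divide_eq le_max_iff_disj)
  qed
qed

lemma unit_nbhd_measure:
  assumes "unit_nbhd U"
  shows "U \<in> sets borel" "emeasure \<mu> U < \<infinity>" "measure \<mu> U > 0"
proof -
  have U: "compact U" "0 \<in> interior U" using assms unfolding unit_nbhd_def by auto
  show U_sets: "U \<in> sets borel" using U by (simp add: borel_compact)
  show U_fin: "emeasure \<mu> U < \<infinity>" using emeasure_compact_finite[OF U(1)] .
  have "0 < emeasure \<mu> (interior U)" using emeasure_open_pos[of "interior U"] U by blast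
  also have "\<dots> \<le> emeasure \<mu> U" using U_sets by (intro emeasure_mono interior_subset) simp
  finally show "measure \<mu> U > 0"
    using U_fin by (simp add: measure_def enn2real_positive_iff)
qed

lemma BUPU_coefficient_bound:
  fixes w m :: "'g \<Rightarrow> real" and x :: "'i \<Rightarrow> 'g"
  assumes w: "sym_submult_weight w" and m: "moderate w m" and r: "r > 1"
    and U: "unit_nbhd U" and BU: "BUPU U I x \<psi>"
  obtains C where "C \<ge> 0"
    "\<And>f i. f \<in> Lpv \<mu> r m \<Longrightarrow> i \<in> I \<Longrightarrow>
      integrable \<mu> (\<lambda>y. f y * cnj (complex_of_real (\<psi> i y))) \<and>
      (m (x i) * cmod (\<integral>y. f y * cnj (complex_of_real (\<psi> i y)) \<partial>\<mu>)) powr r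
        \<le> C * (\<integral>y. indicator ((\<lambda>q. x i + q) ` U) y * (m y * cmod (f y)) powr r \<partial>\<mu>)"
proof -
  define E where "E i = (\<lambda>q. x i + q) ` U" for i
  have Uc: "compact U" using U unfolding unit_nbhd_def by auto
  have m_cont: "continuous_on UNIV m" and m_pos: "\<And>y. m y > 0"
    using m unfolding moderate_def by auto
  have \<psi>: "\<And>i. i \<in> I \<Longrightarrow> \<psi> i \<in> borel_measurable borel"
    "\<And>i y. i \<in> I \<Longrightarrow> 0 \<le> \<psi> i y \<and> \<psi> i y \<le> 1"
    "\<And>i y. i \<in> I \<Longrightarrow> y \<notin> E i \<Longrightarrow> \<psi> i y = 0"
    using BU unfolding BUPU_def E_def by auto
  obtain Cu where Cu: "Cu > 0" "\<And>a u. u \<in> U \<Longrightarrow> m a \<le> Cu * m (a + u)"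
    using moderate_translate_bound[OF w m Uc] by blast
  have U_meas: "U \<in> sets borel" "emeasure \<mu> U < \<infinity>" "measure \<mu> U > 0"
    using unit_nbhd_measure[OF U] by auto
  have E_sets: "E i \<in> sets borel" for i
    unfolding E_def using Uc by (simp add: compact_image_add_left borel_compact)
  have E_emeasure: "emeasure \<mu> (E i) = emeasure \<mu> U" for i
    unfolding E_def by (rule emeasure_image_add_left[OF U_meas(1)])
  have E_fin: "emeasure \<mu> (E i) < \<infinity>" for i
    unfolding E_emeasure using U_meas(2) .
  have E_measure: "measure \<mu> (E i) = measure \<mu> U" for i
    unfolding measure_def E_emeasure ..
  have m_le: "m (x i) \<le> Cu * m y" if y: "y \<in> E i" for i y
    using y Cu(2) unfolding E_def by auto
  define C where "C = Cu powr r * (2 powr r * measure \<mu> U powr (r - 1))"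
  have [measurable]: "m \<in> borel_measurable borel"
    using borel_measurable_continuous_onI[OF m_cont] .
  show ?thesis
  proof (rule that[of C])
    show "C \<ge> 0" unfolding C_def by simp
    fix f i assume f: "f \<in> Lpv \<mu> r m" and i: "i \<in> I"
    then have [measurable]: "f \<in> borel_measurable borel" "\<psi> i \<in> borel_measurable borel"
      using \<psi>(1) unfolding Lpv_def by auto
    note bound = localized_coefficient_powr_le[of "E i" \<mu> f m r "\<psi> i" "m (x i)" Cu]
    show "integrable \<mu> (\<lambda>y. f y * cnj (complex_of_real (\<psi> i y))) \<and>
      (m (x i) * cmod (\<integral>y. f y * cnj (complex_of_real (\<psi> i y)) \<partial>\<mu>)) powr r
        \<le> C * (\<integral>y. indicator ((\<lambda>q. x i + q) ` U) y * (m y * cmod (f y)) powr r \<partial>\<mu>)"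
      using bound E_sets E_fin E_measure U_meas(3) f m_pos \<psi>(2,3)[OF i] m_le Cu(1) r
      unfolding C_def E_def Lpv_def by simp
  qed
qed

theorem analysis_operator_bounded:
  fixes w m :: "'g \<Rightarrow> real" and x :: "'i \<Rightarrow> 'g"
  assumes w: "sym_submult_weight w" and m: "moderate w m" and r: "r > 1"
    and U: "unit_nbhd U" and BU: "BUPU U I x \<psi>"
  shows "(\<forall>f \<in> Lpv \<mu> r m.
           (\<forall>i\<in>I. integrable \<mu> (\<lambda>y. f y * cnj (complex_of_real (\<psi> i y)))) \<and>
           (\<lambda>i. \<integral>y. f y * cnj (complex_of_real (\<psi> i y)) \<partial>\<mu>) \<in> ell_space I r (\<lambda>i. m (x i))) \<and>
         (\<exists>C. \<forall>f \<in> Lpv \<mu> r m.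
           ell_norm I r (\<lambda>i. m (x i)) (\<lambda>i. \<integral>y. f y * cnj (complex_of_real (\<psi> i y)) \<partial>\<mu>)
             \<le> C * Lpv_norm \<mu> r m f)"
proof -
  define c where "c f i = (\<integral>y. f y * cnj (complex_of_real (\<psi> i y)) \<partial>\<mu>)" for f i
  obtain C where C: "C \<ge> 0"
    "\<And>f i. f \<in> Lpv \<mu> r m \<Longrightarrow> i \<in> I \<Longrightarrow>
      integrable \<mu> (\<lambda>y. f y * cnj (complex_of_real (\<psi> i y))) \<and>
      (m (x i) * cmod (c f i)) powr r
        \<le> C * (\<integral>y. indicator ((\<lambda>q. x i + q) ` U) y * (m y * cmod (f y)) powr r \<partial>\<mu>)"
    using BUPU_coefficient_bound[OF w m r U BU] unfolding c_def by blast
  obtain N :: nat where N: "\<And>y. finite {i\<in>I. y \<in> (\<lambda>q. x i + q) ` U}"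
    "\<And>y. card {i\<in>I. y \<in> (\<lambda>q. x i + q) ` U} \<le> N"
    using BU U unfolding BUPU_def rel_separated_def by blast
  have E_sets: "(\<lambda>q. x i + q) ` U \<in> sets \<mu>" for i
    using U unfolding unit_nbhd_def by (simp add: compact_image_add_left borel_compact)
  have bound: "(\<forall>i\<in>I. integrable \<mu> (\<lambda>y. f y * cnj (complex_of_real (\<psi> i y)))) \<and>
      c f \<in> ell_space I r (\<lambda>i. m (x i)) \<and>
      ell_norm I r (\<lambda>i. m (x i)) (c f) \<le> (C * N) powr (1 / r) * Lpv_norm \<mu> r m f"
    if f: "f \<in> Lpv \<mu> r m" for f
  proof -
    define a where "a i = (m (x i) * cmod (c f i)) powr r" for i
    define A where "A = (\<integral>y. (m y * cmod (f y)) powr r \<partial>\<mu>)"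
    have finite_sums: "(\<Sum>i\<in>F. a i) \<le> C * N * A" if F: "finite F" "F \<subseteq> I" for F
    proof -
      have "(\<Sum>i\<in>F. a i)
            \<le> C * (\<Sum>i\<in>F. \<integral>y. indicator ((\<lambda>q. x i + q) ` U) y * (m y * cmod (f y)) powr r \<partial>\<mu>)"
        unfolding a_def sum_distrib_left using C(2)[OF f] F by (intro sum_mono) auto
      also have "\<dots> \<le> C * (N * A)"
        using F E_sets N f C(1) unfolding A_def Lpv_def
        by (intro mult_left_mono sum_integral_indicator_le) auto
      finally show ?thesis by (simp add: mult.assoc)
    qed
    have a_summable: "a summable_on I"
      using finite_sums by (intro nonneg_bdd_above_summable_on bdd_aboveI2) (auto simp: a_def)
    have "ell_norm I r (\<lambda>i. m (x i)) (c f) = (\<Sum>\<^sub>\<infinity>i\<in>I. a i) powr (1 / r)"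
      unfolding ell_norm_def a_def ..
    also have "\<dots> \<le> (C * N * A) powr (1 / r)"
      using infsum_le_finite_sums[OF a_summable finite_sums] r
      by (intro powr_mono2) (auto intro: infsum_nonneg simp: a_def)
    also have "\<dots> = (C * N) powr (1 / r) * Lpv_norm \<mu> r m f"
      unfolding Lpv_norm_def A_def using C(1)
      by (simp add: powr_mult Bochner_Integration.integral_nonneg)
    finally show ?thesis
      using a_summable C(2)[OF f] unfolding ell_space_def a_def by blast
  qed
  then show ?thesis unfolding c_def by blast
qed

lemma synthesis_partial_sums_bound:
  fixes w m :: "'g \<Rightarrow> real" and W :: "'g \<Rightarrow> complex" and x :: "'i \<Rightarrow> 'g"
  assumes w: "sym_submult_weight w" and m: "moderate w m" and r: "r > 1"
    and W: "continuous_on UNIV W" and Q: "unit_nbhd Q"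
    and MW1: "(\<lambda>y. complex_of_real (locmax \<mu> Q W y)) \<in> Lpv \<mu> 1 w"
    and MW2: "(\<lambda>y. complex_of_real (locmax \<mu> Q W y)) \<in> Lpv \<mu> 1 (\<lambda>y. w y / \<Delta> y)"
    and X: "rel_separated I x"
  obtains K where "K \<ge> 0"
    "\<And>c E. finite E \<Longrightarrow> E \<subseteq> I \<Longrightarrow>
      (\<integral>\<^sup>+y. ennreal ((m y * (\<Sum>i\<in>E. cmod (c i * W (- x i + y)))) powr r) \<partial>\<mu>)
        \<le> ennreal (K * (\<Sum>i\<in>E. (m (x i) * cmod (c i)) powr r))"
proof -
  have w_cont: "continuous_on UNIV w" and w_pos: "\<And>y. w y > 0"
    using w unfolding sym_submult_weight_def by auto
  have m_pos: "\<And>y. m y > 0"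
    using m unfolding moderate_def by auto
  have "integrable \<mu> (\<lambda>z. w z / \<Delta> z * cmod (complex_of_real (locmax \<mu> Q W z)))"
    by (rule Lpv_one_integrable[OF MW2]) (use w_pos modular_pos in \<open>simp add: less_imp_le\<close>)
  then have "integrable \<mu> (\<lambda>z. w z / \<Delta> z * \<bar>locmax \<mu> Q W z\<bar>)"
    by (simp only: norm_of_real)
  then obtain B where B: "B > 0"
    "\<And>y E. finite E \<Longrightarrow> E \<subseteq> I \<Longrightarrow> (\<Sum>i\<in>E. w (- x i + y) * cmod (W (- x i + y))) \<le> B"
    using sum_translates_bounded[OF w Q W _ X] by blast
  define F where "F z = w z * cmod (W z)" for z
  have [measurable]: "F \<in> borel_measurable borel"
    unfolding F_def using borel_measurable_continuous_onI[OF w_cont] borel_measurable_continuous_onI[OF W]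
    by measurable
  have F_nonneg: "F z \<ge> 0" for z unfolding F_def using w_pos[of z] by simp
  have F_int: "integrable \<mu> F"
  proof (rule Bochner_Integration.integrable_bound[OF Lpv_one_integrable[OF MW1]])
    show "AE z in \<mu>. norm (F z) \<le> norm (w z * cmod (complex_of_real (locmax \<mu> Q W z)))"
      unfolding F_def using norm_le_abs_locmax[OF Q W] w_pos by (simp add: abs_mult mult_left_mono)
  qed (use w_pos in \<open>auto simp: less_imp_le\<close>)
  define K where "K = 2 powr r * B powr (r - 1) * (\<integral>z. F z \<partial>\<mu>)"
  show ?thesis
  proof (rule that[of K])
    show "K \<ge> 0" unfolding K_def using F_nonneg by (simp add: Bochner_Integration.integral_nonneg)
    fix c :: "'i \<Rightarrow> complex" and E assume E: "finite E" "E \<subseteq> I"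
    define a where "a i = m (x i) * cmod (c i)" for i
    have a_nonneg: "a i \<ge> 0" for i unfolding a_def using m_pos[of "x i"] by simp
    define \<Psi> where "\<Psi> y = 2 powr r * B powr (r - 1) * (\<Sum>i\<in>E. a i powr r * F (- x i + y))" for y
    have pointwise: "(m y * (\<Sum>i\<in>E. cmod (c i * W (- x i + y)))) powr r \<le> \<Psi> y" for y
      unfolding \<Psi>_def a_def F_def using moderate_sum_translates_powr_le[OF m E(1) B(1) B(2)[OF E] r] .
    have F_shift_int: "integrable \<mu> (\<lambda>y. F (- x i + y))" "(\<integral>y. F (- x i + y) \<partial>\<mu>) = (\<integral>z. F z \<partial>\<mu>)" for i
      using integral_add_left[OF _ F_nonneg F_int] by auto
    have "(\<integral>\<^sup>+y. ennreal ((m y * (\<Sum>i\<in>E. cmod (c i * W (- x i + y)))) powr r) \<partial>\<mu>)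
          \<le> (\<integral>\<^sup>+y. ennreal (\<Psi> y) \<partial>\<mu>)"
      using pointwise by (intro nn_integral_mono ennreal_leI)
    also have "\<dots> = ennreal (\<integral>y. \<Psi> y \<partial>\<mu>)"
      unfolding \<Psi>_def using F_shift_int(1) a_nonneg F_nonneg
      by (intro nn_integral_eq_integral) (auto intro!: sum_nonneg mult_nonneg_nonneg)
    also have "(\<integral>y. \<Psi> y \<partial>\<mu>) = K * (\<Sum>i\<in>E. a i powr r)"
      unfolding \<Psi>_def K_def using F_shift_int
      by (simp add: Bochner_Integration.integral_sum sum_distrib_left sum_distrib_right mult_ac)
    finally show "(\<integral>\<^sup>+y. ennreal ((m y * (\<Sum>i\<in>E. cmod (c i * W (- x i + y)))) powr r) \<partial>\<mu>)
        \<le> ennreal (K * (\<Sum>i\<in>E. (m (x i) * cmod (c i)) powr r))"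
      unfolding a_def .
  qed
qed

theorem synthesis_operator_bounded:
  fixes w m :: "'g \<Rightarrow> real" and W :: "'g \<Rightarrow> complex" and x :: "'i \<Rightarrow> 'g"
  assumes w: "sym_submult_weight w" and m: "moderate w m" and r: "r > 1"
    and W: "continuous_on UNIV W" and Q: "unit_nbhd Q"
    and MW1: "(\<lambda>y. complex_of_real (locmax \<mu> Q W y)) \<in> Lpv \<mu> 1 w"
    and MW2: "(\<lambda>y. complex_of_real (locmax \<mu> Q W y)) \<in> Lpv \<mu> 1 (\<lambda>y. w y / \<Delta> y)"
    and X: "rel_separated I x"
  shows "(\<forall>c \<in> ell_space I r (\<lambda>i. m (x i)).
           (AE y in \<mu>. (\<lambda>i. cmod (c i * W (- x i + y))) summable_on I) \<and>
           (\<lambda>y. \<Sum>\<^sub>\<infinity>i\<in>I. c i * W (- x i + y)) \<in> Lpv \<mu> r m) \<and>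
         (\<exists>C. \<forall>c \<in> ell_space I r (\<lambda>i. m (x i)).
           Lpv_norm \<mu> r m (\<lambda>y. \<Sum>\<^sub>\<infinity>i\<in>I. c i * W (- x i + y)) \<le> C * ell_norm I r (\<lambda>i. m (x i)) c)"
proof -
  obtain K where K: "K \<ge> 0"
    "\<And>c E. finite E \<Longrightarrow> E \<subseteq> I \<Longrightarrow>
      (\<integral>\<^sup>+y. ennreal ((m y * (\<Sum>i\<in>E. cmod (c i * W (- x i + y)))) powr r) \<partial>\<mu>)
        \<le> ennreal (K * (\<Sum>i\<in>E. (m (x i) * cmod (c i)) powr r))"
    using synthesis_partial_sums_bound[OF w m r W Q MW1 MW2 X] by blast
  have m_cont: "continuous_on UNIV m" and m_pos: "\<And>y. m y > 0"
    using m unfolding moderate_def by auto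
  have [measurable]: "m \<in> borel_measurable borel" "W \<in> borel_measurable borel"
    using borel_measurable_continuous_onI[OF m_cont] borel_measurable_continuous_onI[OF W] by auto
  have bound: "(AE y in \<mu>. (\<lambda>i. cmod (c i * W (- x i + y))) summable_on I) \<and>
      (\<lambda>y. \<Sum>\<^sub>\<infinity>i\<in>I. c i * W (- x i + y)) \<in> Lpv \<mu> r m \<and>
      Lpv_norm \<mu> r m (\<lambda>y. \<Sum>\<^sub>\<infinity>i\<in>I. c i * W (- x i + y)) \<le> K powr (1 / r) * ell_norm I r (\<lambda>i. m (x i)) c"
    if c: "c \<in> ell_space I r (\<lambda>i. m (x i))" for c
  proof -
    define a where "a i = (m (x i) * cmod (c i)) powr r" for i
    define A where "A = (\<Sum>\<^sub>\<infinity>i\<in>I. a i)"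
    define S where "S y = (\<Sum>\<^sub>\<infinity>i\<in>I. c i * W (- x i + y))" for y
    have a_summable: "a summable_on I" using c unfolding ell_space_def a_def by simp
    have A_nonneg: "A \<ge> 0" unfolding A_def a_def by (intro infsum_nonneg) simp
    have "countable {i\<in>I. a i \<noteq> 0}" by (rule summable_countable_real[OF a_summable])
    moreover have "c i * W (- x i + y) = 0" if "i \<in> I - {i\<in>I. a i \<noteq> 0}" for i y
      using that m_pos[of "x i"] unfolding a_def by simp
    moreover have "(\<integral>\<^sup>+y. ennreal ((m y * (\<Sum>i\<in>E. cmod (c i * W (- x i + y)))) powr r) \<partial>\<mu>)
                   \<le> ennreal (K * A)" if "finite E" "E \<subseteq> I" for E
    proof -
      have "(\<Sum>i\<in>E. a i) \<le> A"
        unfolding A_def by (rule finite_sum_le_infsum[OF a_summable that]) (simp add: a_def)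
      then have "K * (\<Sum>i\<in>E. a i) \<le> K * A" using K(1) by (rule mult_left_mono)
      then show ?thesis using K(2)[OF that, of c] unfolding a_def by (meson ennreal_leI order_trans)
    qed
    ultimately have series: "AE y in \<mu>. (\<lambda>i. cmod (c i * W (- x i + y))) summable_on I"
      "S \<in> borel_measurable \<mu>"
      "(\<integral>\<^sup>+y. ennreal ((m y * cmod (S y)) powr r) \<partial>\<mu>) \<le> ennreal (K * A)"
      using weighted_series_Lr_bound[of "{i\<in>I. a i \<noteq> 0}" I "\<lambda>i y. c i * W (- x i + y)" \<mu> m r "K * A"]
        m_pos r unfolding S_def by (auto simp: less_imp_le)
    have S_int: "integrable \<mu> (\<lambda>y. (m y * cmod (S y)) powr r)"
      using series(2,3) by (intro integrableI_bounded) (auto simp: le_less_trans)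
    have "(\<integral>y. (m y * cmod (S y)) powr r \<partial>\<mu>) \<le> K * A"
      using series(2,3) K(1) A_nonneg
      by (subst integral_eq_nn_integral) (auto intro: enn2real_leI)
    then have "Lpv_norm \<mu> r m S \<le> (K * A) powr (1 / r)"
      unfolding Lpv_norm_def using r by (intro powr_mono2) (auto intro: Bochner_Integration.integral_nonneg)
    also have "\<dots> = K powr (1 / r) * ell_norm I r (\<lambda>i. m (x i)) c"
      unfolding ell_norm_def A_def a_def using K(1) A_nonneg[unfolded A_def a_def] by (simp add: powr_mult)
    finally show ?thesis
      using series(1,2) S_int unfolding Lpv_def S_def by auto
  qed
  then show ?thesis by blast
qed

end

theorem mainTheorem17:
  fixes \<mu> :: "'g::{group_add,t2_space,second_countable_topology} measure"
    and \<Delta> w m :: "'g \<Rightarrow> real"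
    and smul :: "complex \<Rightarrow> 'h::ab_group_add \<Rightarrow> 'h" and ip :: "'h \<Rightarrow> 'h \<Rightarrow> complex"
    and \<pi> :: "'g \<Rightarrow> 'h \<Rightarrow> 'h" and u :: 'h
    and K W :: "'g \<Rightarrow> complex" and r :: real and Q :: "'g set"
    and I :: "'i set" and x :: "'i \<Rightarrow> 'g"
  assumes G: "lc_haar_group \<mu> \<Delta>"
    and w: "sym_submult_weight w"
    and H: "hilbert_space smul ip"
    and rep: "unitary_rep smul ip \<pi>"
    and adm: "admissible \<mu> ip \<pi> u"
    and Kdef: "K = (\<lambda>y. ip u (\<pi> y u))"
    and K_int: "\<forall>p>1. K \<in> Lpv \<mu> p w"
    and r: "r > 1"
    and m: "moderate w m"
    and RC: "conv_bounded \<mu> r m K"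
    and W_cont: "continuous_on UNIV W"
    and WK: "\<forall>y. integrable \<mu> (\<lambda>z. W z * K (- z + y)) \<and> conv \<mu> W K y = K y"
    and Q: "unit_nbhd Q"
    and MW1: "(\<lambda>y. complex_of_real (locmax \<mu> Q W y)) \<in> Lpv \<mu> 1 w"
    and MW2: "(\<lambda>y. complex_of_real (locmax \<mu> Q W y)) \<in> Lpv \<mu> 1 (\<lambda>y. w y / \<Delta> y)"
    and X: "rel_separated I x"
  shows
    "(\<forall>U \<psi>. unit_nbhd U \<and> BUPU U I x \<psi> \<longrightarrow>
        (\<forall>f \<in> Lpv \<mu> r m.
           (\<forall>i\<in>I. integrable \<mu> (\<lambda>y. f y * cnj (complex_of_real (\<psi> i y)))) \<and>
           (\<lambda>i. \<integral>y. f y * cnj (complex_of_real (\<psi> i y)) \<partial>\<mu>) \<in> ell_space I r (\<lambda>i. m (x i))) \<and>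
        (\<exists>C. \<forall>f \<in> Lpv \<mu> r m.
           ell_norm I r (\<lambda>i. m (x i)) (\<lambda>i. \<integral>y. f y * cnj (complex_of_real (\<psi> i y)) \<partial>\<mu>)
             \<le> C * Lpv_norm \<mu> r m f))
     \<and>
     ((\<forall>c \<in> ell_space I r (\<lambda>i. m (x i)).
         (AE y in \<mu>. (\<lambda>i. cmod (c i * W (- x i + y))) summable_on I) \<and>
         (\<lambda>y. \<Sum>\<^sub>\<infinity>i\<in>I. c i * W (- x i + y)) \<in> Lpv \<mu> r m) \<and>
      (\<exists>C. \<forall>c \<in> ell_space I r (\<lambda>i. m (x i)).
         Lpv_norm \<mu> r m (\<lambda>y. \<Sum>\<^sub>\<infinity>i\<in>I. c i * W (- x i + y)) \<le> C * ell_norm I r (\<lambda>i. m (x i)) c))"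
proof -
  interpret haar_group \<mu> \<Delta> by (rule haar_group.intro[OF G])
  show ?thesis
    using analysis_operator_bounded[OF w m r] synthesis_operator_bounded[OF w m r W_cont Q MW1 MW2 X]
    by blast
qed

end
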